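(* Let $G=(P,E)$ be a finite, connected, undirected, simple graph on the vertex set $P=\{1,\dots,n\}$ with $n\ge 2$, and let $W$ be a finite totally ordered set of $p$ words. Consider the automata network with confusion parameter $\epsilon=0$ described in the context, started from any initial configuration of the form $(M_u,x_u)=(\{x_u\},x_u)$ with $x_u\in W$ for every $u\in P$, and run under the fully-asynchronous updating scheme. Then the expected number of time steps until the system reaches a fixed point is $\mathcal{O}(n^2p\log n)$. That is, there is an absolute constant $C$ such that for every such $G$, $W$ and initial configuration, this expected number is at most $Cn^2p\log n$.
   Context: Model. Each vertex $u\in P$ (an individual) has a state $(M_u,x_u)$, where the memory $M_u$ is a subset of $W$ and $x_u\in M_u$ is the word $u$ conveys to its neighbours. The neighbourhood of $u$ is $V_u=\{v\in P:(u,v)\in E\}$. The total order on $W$ is written $\prec$, and $\min$ refers to it. Local rule of $u$ for confusion parameter $\epsilon=0$. When $u$ is updated, it first forms $N_u=\{x_v : v\in V_u,\ x_v\notin M_u\}$ and $B_u=\{x_v : v\in V_u,\ x_v\in M_u\}$. If $N_u\neq\emptyset$, the memory becomes $M_u\cup N_u$ and $x_u$ is unchanged (addition). Otherwise the state becomes $(\{\min B_u\},\min B_u)$ (collapse). All other vertices keep their states. Updating schemes. One vertex is updated per time step. Under the sequential scheme, a fixed permutation $\sigma$ of $P$ is chosen and vertices are updated cyclically in the order $\sigma(1),\dots,\sigma(n),\sigma(1),\dots$, with each update using the current states. Under the fully-asynchronous scheme, at each time step one vertex is chosen uniformly at random from $P$, independently of all other steps. A fixed point is a configuration that is left unchanged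 by the local rule of every vertex. *)

theory Defs
  imports "HOL-Probability.Probability"
begin

text \<open>Vertices are natural numbers, words are natural numbers (the total order on W
  is the order of nat restricted to W). A configuration assigns to every vertex u a
  pair (M_u, x_u).\<close>

type_synonym config = "nat \<Rightarrow> nat set \<times> nat"

definition simple_connected_graph :: "nat set \<Rightarrow> (nat \<times> nat) set \<Rightarrow> bool" where
  "simple_connected_graph P E \<longleftrightarrow>
     E \<subseteq> P \<times> P \<and> sym E \<and> irrefl E \<and> (\<forall>u\<in>P. \<forall>v\<in>P. (u, v) \<in> E\<^sup>*)"

definition nbhd :: "(nat \<times> nat) set \<Rightarrow> nat \<Rightarrow> nat set" where
  "nbhd E u = {v. (u, v) \<in> E}"

definition local_rule :: "(nat \<times> nat) set \<Rightarrow> config \<Rightarrow> nat \<Rightarrow> nat set \<times> nat" where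
  "local_rule E c u =
     (let Mu = fst (c u); xu = snd (c u);
          N = {snd (c v) | v. v \<in> nbhd E u \<and> snd (c v) \<notin> Mu};
          B = {snd (c v) | v. v \<in> nbhd E u \<and> snd (c v) \<in> Mu}
      in if N \<noteq> {} then (Mu \<union> N, xu) else ({Min B}, Min B))"

definition update :: "(nat \<times> nat) set \<Rightarrow> nat \<Rightarrow> config \<Rightarrow> config" where
  "update E u c = c(u := local_rule E c u)"

definition fixed_point :: "nat set \<Rightarrow> (nat \<times> nat) set \<Rightarrow> config \<Rightarrow> bool" where
  "fixed_point P E c \<longleftrightarrow> (\<forall>u\<in>P. update E u c = c)"

fun run :: "(nat \<times> nat) set \<Rightarrow> config \<Rightarrow> (nat \<Rightarrow> nat) \<Rightarrow> nat \<Rightarrow> config" where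
  "run E c0 \<omega> 0 = c0"
| "run E c0 \<omega> (Suc t) = update E (\<omega> t) (run E c0 \<omega> t)"

definition hit_time :: "nat set \<Rightarrow> (nat \<times> nat) set \<Rightarrow> config \<Rightarrow> (nat \<Rightarrow> nat) \<Rightarrow> enat" where
  "hit_time P E c0 \<omega> =
     (if \<exists>t. fixed_point P E (run E c0 \<omega> t)
      then enat (LEAST t. fixed_point P E (run E c0 \<omega> t)) else \<infinity>)"

text \<open>Fully asynchronous scheme: the updated vertices form an i.i.d. sequence,
  each uniform on P.\<close>
definition async_space :: "nat set \<Rightarrow> (nat \<Rightarrow> nat) measure" where
  "async_space P = PiM UNIV (\<lambda>_::nat. measure_pmf (pmf_of_set P))"

definition expected_hit_time :: "nat set \<Rightarrow> (nat \<times> nat) set \<Rightarrow> config \<Rightarrow> ennreal" where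
  "expected_hit_time P E c0 =
     (\<integral>\<^sup>+ \<omega>. ennreal_of_enat (hit_time P E c0 \<omega>) \<partial>async_space P)"

end

theory Submission
  imports Defs
begin

text \<open>
  Let \<open>m\<close> be the smallest word conveyed. Updates only ever convey words that were already conveyed,
  so \<open>m\<close> never decreases and can increase at most \<open>p\<close> times. While no two neighbours both convey
  \<open>m\<close>, an update of a vertex conveying \<open>m\<close> either enlarges its memory or makes it stop conveying
  \<open>m\<close>. Once two neighbours convey \<open>m\<close> they keep it forever, and a neighbour of such a pair joins
  them as soon as it collapses, which it must do before its memory exceeds \<open>p\<close> words. Once every
  vertex conveys \<open>m\<close>, each vertex reaches its final state at its next update. Each of these
  progress measures is a sum of at most \<open>n p\<close> unit decrements, each hit with probability at least
  \<open>1/n\<close> per step; weighting the current one harmonically, as for coupon collecting, and the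
  phases lexicographically gives a potential of size \<open>O(n\<^sup>2 p log n)\<close> whose expected decrease in
  every step is at least one, which bounds the expected hitting time.
\<close>

fun avoids_fixed_points :: "nat set \<Rightarrow> (nat \<times> nat) set \<Rightarrow> config \<Rightarrow> nat list \<Rightarrow> bool" where
  "avoids_fixed_points P E s [] \<longleftrightarrow> \<not> fixed_point P E s"
| "avoids_fixed_points P E s (u # us) \<longleftrightarrow>
     \<not> fixed_point P E s \<and> avoids_fixed_points P E (update E u s) us"

lemma run_Suc_shift: "run E s \<omega> (Suc t) = run E (update E (\<omega> 0) s) (\<lambda>i. \<omega> (Suc i)) t"
  by (induction t) auto

lemma avoids_fixed_points_stake:
  "avoids_fixed_points P E s (stake t xs) \<longleftrightarrow> (\<forall>t'\<le>t. \<not> fixed_point P E (run E s (snth xs) t'))"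
proof (induction t arbitrary: s xs)
  case 0
  then show ?case by simp
next
  case (Suc t)
  have "run E s (snth xs) (Suc t') = run E (update E (shd xs) s) (snth (stl xs)) t'" for t'
    by (subst run_Suc_shift) simp
  then show ?case
    using Suc by (simp add: stake.simps less_Suc_eq_le[symmetric] All_less_Suc2 del: run.simps(2))
qed

lemma ennreal_of_enat_Least_eq_suminf:
  "ennreal_of_enat (if \<exists>t. F t then enat (LEAST t. F t) else \<infinity>) = (\<Sum>t. of_bool (\<forall>t'\<le>t. \<not> F t'))"
proof (cases "\<exists>t. F t")
  case True
  define k where "k = (LEAST t. F t)"
  have "(\<forall>t'\<le>t. \<not> F t') \<longleftrightarrow> t < k" for t
    using True not_less_Least[of _ F] LeastI_ex[of F] unfolding k_def by (meson le_trans not_le)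
  then have "(\<Sum>t. of_bool (\<forall>t'\<le>t. \<not> F t') :: ennreal) = (\<Sum>t<k. 1)"
    by (subst suminf_finite[of "{..<k}"]) auto
  then show ?thesis using True k_def by simp
next
  case False
  have "(\<Sum>t. ennreal 1) = top"
    by (rule summable_iff_suminf_neq_top) (auto simp: summable_const_iff)
  then show ?thesis using False by simp
qed

definition survival :: "nat set \<Rightarrow> (nat \<times> nat) set \<Rightarrow> config \<Rightarrow> nat \<Rightarrow> ennreal" where
  "survival P E s t =
     (\<integral>\<^sup>+xs. of_bool (avoids_fixed_points P E s (stake t xs)) \<partial>stream_space (pmf_of_set P))"

lemma measurable_avoids_fixed_points [measurable]:
  "(\<lambda>xs. of_bool (avoids_fixed_points P E s (stake t xs)) :: ennreal)
     \<in> borel_measurable (stream_space (measure_pmf M))"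
proof -
  have "sets (stream_space (measure_pmf M)) = sets (stream_space (count_space UNIV))"
    by (rule sets_stream_space_cong) simp
  then show ?thesis
    by (subst measurable_cong_sets[OF _ refl]) (auto intro: measurable_compose[OF measurable_stake])
qed

lemma expected_hit_time_eq_suminf_survival:
  "expected_hit_time P E c0 = (\<Sum>t. survival P E c0 t)"
proof -
  define M where "M = measure_pmf (pmf_of_set P)"
  define g where "g xs = (\<Sum>t. of_bool (avoids_fixed_points P E c0 (stake t xs)) :: ennreal)" for xs
  have snth_to_stream: "snth (to_stream \<omega>) = \<omega>" for \<omega> :: "nat \<Rightarrow> nat"
    by (simp add: to_stream_def fun_eq_iff)
  have "expected_hit_time P E c0 = (\<integral>\<^sup>+\<omega>. g (to_stream \<omega>) \<partial>(\<Pi>\<^sub>M i\<in>UNIV. M))"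
    unfolding expected_hit_time_def async_space_def hit_time_def g_def M_def
    by (simp only: avoids_fixed_points_stake snth_to_stream ennreal_of_enat_Least_eq_suminf)
  also have "\<dots> = (\<integral>\<^sup>+xs. g xs \<partial>stream_space M)"
  proof -
    have "g \<in> borel_measurable (stream_space M)"
      unfolding g_def M_def by measurable
    then have "(\<integral>\<^sup>+\<omega>. g (to_stream \<omega>) \<partial>(\<Pi>\<^sub>M i\<in>UNIV. M)) =
        (\<integral>\<^sup>+xs. g xs \<partial>distr (\<Pi>\<^sub>M i\<in>UNIV. M) (stream_space M) to_stream)"
      by (simp add: nn_integral_distr)
    then show ?thesis
      by (simp only: stream_space_eq_distr[symmetric])
  qed
  also have "\<dots> = (\<Sum>t. survival P E c0 t)"
    unfolding g_def survival_def M_def by (rule nn_integral_suminf) simp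
  finally show ?thesis .
qed

lemma survival_0: "survival P E s 0 = of_bool (\<not> fixed_point P E s)"
proof -
  interpret prob_space "stream_space (measure_pmf (pmf_of_set P))"
    by (rule prob_space.prob_space_stream_space[OF prob_space_measure_pmf])
  show ?thesis by (simp add: survival_def emeasure_space_1)
qed

lemma survival_Suc:
  assumes "finite P" "P \<noteq> {}"
  shows "survival P E s (Suc t) =
           of_bool (\<not> fixed_point P E s) * ((\<Sum>u\<in>P. survival P E (update E u s) t) / of_nat (card P))"
proof -
  have "survival P E s (Suc t) =
          (\<integral>\<^sup>+u. of_bool (\<not> fixed_point P E s) * survival P E (update E u s) t \<partial>pmf_of_set P)"
    unfolding survival_def
    by (subst prob_space.nn_integral_stream_space[OF prob_space_measure_pmf])
      (auto simp: nn_integral_cmult intro!: nn_integral_cong)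
  also have "\<dots> =
      of_bool (\<not> fixed_point P E s) * ((\<Sum>u\<in>P. survival P E (update E u s) t) / of_nat (card P))"
    using assms by (simp add: nn_integral_pmf_of_set sum_distrib_left[symmetric] ennreal_times_divide)
  finally show ?thesis .
qed

lemma ennreal_one_plus_mean_le:
  fixes f :: "'a \<Rightarrow> real"
  assumes "finite A" "A \<noteq> {}" "\<And>u. u \<in> A \<Longrightarrow> 0 \<le> f u"
    and "real (card A) + (\<Sum>u\<in>A. f u) \<le> real (card A) * X"
  shows "1 + (\<Sum>u\<in>A. ennreal (f u)) / of_nat (card A) \<le> ennreal X"
proof -
  have card_pos: "0 < real (card A)" and sum_nonneg: "0 \<le> (\<Sum>u\<in>A. f u)"
    using assms by (auto simp: card_gt_0_iff intro: sum_nonneg)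
  have "(\<Sum>u\<in>A. ennreal (f u)) / of_nat (card A) = ennreal ((\<Sum>u\<in>A. f u) / real (card A))"
    using assms(3) card_pos sum_nonneg
    by (simp add: sum_ennreal ennreal_of_nat_eq_real_of_nat divide_ennreal)
  moreover have "1 + (\<Sum>u\<in>A. f u) / real (card A) \<le> X"
    using assms(4) card_pos by (simp add: field_simps)
  moreover have "1 + ennreal ((\<Sum>u\<in>A. f u) / real (card A)) = ennreal (1 + (\<Sum>u\<in>A. f u) / real (card A))"
    using card_pos sum_nonneg by (simp add: ennreal_plus)
  ultimately show ?thesis
    by (simp add: ennreal_leI)
qed

lemma expected_hit_time_le_potential:
  fixes admissible :: "config \<Rightarrow> bool" and potential :: "config \<Rightarrow> real"
  assumes "finite P" "P \<noteq> {}" "admissible c0"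
    and admissible_update: "\<And>s u. admissible s \<Longrightarrow> u \<in> P \<Longrightarrow> admissible (update E u s)"
    and potential_nonneg: "\<And>s. admissible s \<Longrightarrow> 0 \<le> potential s"
    and drift: "\<And>s. admissible s \<Longrightarrow> \<not> fixed_point P E s \<Longrightarrow>
        real (card P) + (\<Sum>u\<in>P. potential (update E u s)) \<le> real (card P) * potential s"
  shows "expected_hit_time P E c0 \<le> ennreal (potential c0)"
proof -
  have "admissible s \<Longrightarrow> (\<Sum>t<T. survival P E s t) \<le> ennreal (potential s)" for T s
  proof (induction T arbitrary: s)
    case 0
    show ?case by simp
  next
    case (Suc T)
    show ?case
    proof (cases "fixed_point P E s")
      case True
      then have "survival P E s t = 0" for t
        by (cases t) (simp_all add: survival_0 survival_Suc assms(1,2))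
      then show ?thesis by simp
    next
      case False
      have "(\<Sum>t<Suc T. survival P E s t) =
          1 + (\<Sum>u\<in>P. \<Sum>t<T. survival P E (update E u s) t) / of_nat (card P)"
        using False assms(1,2)
        by (subst sum.lessThan_Suc_shift) (simp add: survival_0 survival_Suc divide_ennreal_def
            sum_distrib_right[symmetric] sum.swap[of _ P])
      also have "\<dots> \<le> 1 + (\<Sum>u\<in>P. ennreal (potential (update E u s))) / of_nat (card P)"
        using Suc admissible_update by (intro add_left_mono divide_right_mono_ennreal sum_mono) auto
      also have "\<dots> \<le> ennreal (potential s)"
        using Suc.prems False assms(1,2)
        by (intro ennreal_one_plus_mean_le potential_nonneg admissible_update drift)
      finally show ?thesis .
    qed
  qed
  then have "(\<Sum>t. survival P E c0 t) \<le> ennreal (potential c0)"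
    using \<open>admissible c0\<close> by (intro suminf_le_const) (auto intro: summableI)
  then show ?thesis
    by (simp add: expected_hit_time_eq_suminf_survival)
qed

lemma harm_le_ln_plus_1: "1 \<le> k \<Longrightarrow> (harm k :: real) \<le> ln (real k) + 1"
  using euler_mascheroni_sequence_decreasing[of 1 k] by (simp add: harm_def)

lemma harmonic_potential_drift:
  fixes f :: "'a \<Rightarrow> real"
  assumes "finite P" "D \<subseteq> P" "0 < S" "0 \<le> c" "real (card P) * real S \<le> c * real (card D)"
    and step: "\<And>u. u \<in> P \<Longrightarrow> f u \<le> b \<or> (\<exists>S'. f u = b + c * harm S' \<and> S' \<le> S \<and> (u \<in> D \<longrightarrow> S' < S))"
  shows "real (card P) + (\<Sum>u\<in>P. f u) \<le> real (card P) * (b + c * harm S)"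
proof -
  \<comment> \<open>\<open>harm S - harm (S - 1) = 1 / S\<close> makes the \<open>card D\<close> decreasing updates pay for the step.\<close>
  have harm_pred: "harm S' \<le> harm S - 1 / real S" if "S' < S" for S'
  proof -
    obtain T where "S = Suc T" using \<open>0 < S\<close> gr0_implies_Suc by blast
    with that have "harm S' \<le> (harm T :: real)" by (intro harm_mono) simp
    then show ?thesis using \<open>S = Suc T\<close> by (simp add: harm_Suc inverse_eq_divide)
  qed
  have bound: "f u \<le> b + c * harm S - (if u \<in> D then c / real S else 0)" if "u \<in> P" for u
    using step[OF that]
  proof (elim disjE exE conjE)
    assume "f u \<le> b"
    moreover have "1 / real S \<le> harm S"
      using harm_pred[of 0] \<open>0 < S\<close> by (simp add: harm_altdef)
    then have "c / real S \<le> c * harm S"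
      using \<open>0 \<le> c\<close> mult_left_mono by fastforce
    moreover have "0 \<le> c * harm S" using \<open>0 \<le> c\<close> by (simp add: harm_nonneg)
    ultimately show ?thesis by auto
  next
    fix S' assume "f u = b + c * harm S'" "S' \<le> S" "u \<in> D \<longrightarrow> S' < S"
    moreover have "c * harm S' \<le> c * harm S" and "u \<in> D \<Longrightarrow> c * harm S' \<le> c * (harm S - 1 / real S)"
      using \<open>0 \<le> c\<close> \<open>S' \<le> S\<close> \<open>u \<in> D \<longrightarrow> S' < S\<close> harm_pred
      by (auto intro!: mult_left_mono harm_mono)
    ultimately show ?thesis by (auto simp: right_diff_distrib)
  qed
  have "(\<Sum>u\<in>P. f u) \<le> (\<Sum>u\<in>P. b + c * harm S - (if u \<in> D then c / real S else 0))"
    by (rule sum_mono) (rule bound)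
  also have "\<dots> = real (card P) * (b + c * harm S) - real (card D) * (c / real S)"
    using assms(1,2) by (simp add: sum_subtractf sum.If_cases Int_absorb1)
  finally have "(\<Sum>u\<in>P. f u) \<le> real (card P) * (b + c * harm S) - real (card D) * (c / real S)" .
  moreover have "real (card P) \<le> real (card D) * (c / real S)"
    using assms(3,5) by (simp add: field_simps)
  ultimately show ?thesis by linarith
qed

abbreviation memory :: "config \<Rightarrow> nat \<Rightarrow> nat set" where
  "memory s v \<equiv> fst (s v)"

abbreviation word :: "config \<Rightarrow> nat \<Rightarrow> nat" where
  "word s v \<equiv> snd (s v)"

definition heard :: "(nat \<times> nat) set \<Rightarrow> config \<Rightarrow> nat \<Rightarrow> nat set" where
  "heard E s u = word s ` nbhd E u"

lemma update_self:
  "update E u s u =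
     (if heard E s u \<subseteq> memory s u then ({Min (heard E s u)}, Min (heard E s u))
      else (memory s u \<union> heard E s u, word s u))"
proof -
  have "{word s v | v. v \<in> nbhd E u \<and> word s v \<notin> memory s u} = heard E s u - memory s u"
    and "{word s v | v. v \<in> nbhd E u \<and> word s v \<in> memory s u} = heard E s u \<inter> memory s u"
    unfolding heard_def by auto
  then show ?thesis
    by (auto simp: update_def local_rule_def Let_def Int_absorb2 Un_Diff_cancel)
qed

lemma update_other: "v \<noteq> u \<Longrightarrow> update E u s v = s v"
  by (simp add: update_def)

locale word_network =
  fixes P :: "nat set" and E :: "(nat \<times> nat) set" and W :: "nat set"
  assumes finite_P: "finite P" and two_le_card_P: "2 \<le> card P"
    and graph: "simple_connected_graph P E"
    and finite_W: "finite W" and W_nonempty: "W \<noteq> {}"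
begin

lemma P_nonempty: "P \<noteq> {}"
  using two_le_card_P by auto

lemma nbhd_subset: "nbhd E u \<subseteq> P"
  using graph by (auto simp: simple_connected_graph_def nbhd_def)

lemma not_in_nbhd_self: "u \<notin> nbhd E u"
  using graph by (auto simp: simple_connected_graph_def nbhd_def irrefl_def)

lemma in_nbhd_commute: "v \<in> nbhd E u \<longleftrightarrow> u \<in> nbhd E v"
  using graph by (auto simp: simple_connected_graph_def nbhd_def sym_def)

lemma edge_leaving:
  assumes "A \<subseteq> P" "a \<in> A" "b \<in> P - A"
  obtains x y where "x \<in> A" "y \<in> P - A" "x \<in> nbhd E y"
proof -
  have "(a, b) \<in> E\<^sup>*"
    using graph assms by (auto simp: simple_connected_graph_def)
  then have "b \<in> A \<or> (\<exists>x\<in>A. \<exists>y\<in>P - A. (x, y) \<in> E)"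
  proof (induction rule: rtrancl_induct)
    case (step y z)
    then show ?case
      using graph by (cases "y \<in> A"; cases "z \<in> A") (auto simp: simple_connected_graph_def)
  qed (use assms in simp)
  then show ?thesis
    using assms that in_nbhd_commute by (auto simp: nbhd_def)
qed

lemma nbhd_nonempty: "u \<in> P \<Longrightarrow> nbhd E u \<noteq> {}"
proof -
  assume "u \<in> P"
  have "\<not> P \<subseteq> {u}"
    using two_le_card_P card_mono[of "{u}" P] by auto
  then obtain b where "b \<in> P - {u}" by blast
  then obtain x y where "x \<in> {u}" "y \<in> P - {u}" "x \<in> nbhd E y"
    using edge_leaving[of "{u}" u b] \<open>b \<in> P - {u}\<close> \<open>u \<in> P\<close> by blast
  then show "nbhd E u \<noteq> {}"
    using in_nbhd_commute by auto
qed

lemma finite_heard: "finite (heard E s u)"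
  using finite_subset[OF nbhd_subset finite_P] by (simp add: heard_def)

lemma Min_heard_in: "u \<in> P \<Longrightarrow> Min (heard E s u) \<in> heard E s u"
  using finite_heard nbhd_nonempty by (simp add: heard_def)

definition admissible :: "config \<Rightarrow> bool" where
  "admissible s \<longleftrightarrow> (\<forall>v\<in>P. word s v \<in> memory s v \<and> memory s v \<subseteq> W)"

lemma admissible_update:
  assumes "admissible s" "u \<in> P"
  shows "admissible (update E u s)"
proof -
  have "heard E s u \<subseteq> W"
    using assms nbhd_subset by (auto simp: admissible_def heard_def)
  show ?thesis
    unfolding admissible_def
  proof
    fix v assume "v \<in> P"
    then show "word (update E u s) v \<in> memory (update E u s) v \<and> memory (update E u s) v \<subseteq> W"
      using \<open>heard E s u \<subseteq> W\<close> assms Min_heard_in[OF \<open>u \<in> P\<close>, of s]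
      by (cases "v = u") (auto simp: admissible_def update_self update_other)
  qed
qed

definition min_word :: "config \<Rightarrow> nat" where
  "min_word s = Min (word s ` P)"

lemma min_word_le: "v \<in> P \<Longrightarrow> min_word s \<le> word s v"
  using finite_P by (simp add: min_word_def)

lemma min_word_attained: obtains v where "v \<in> P" "word s v = min_word s"
proof -
  have "min_word s \<in> word s ` P"
    unfolding min_word_def using finite_P P_nonempty by (intro Min_in) auto
  then show thesis using that by auto
qed

lemma min_word_in_W: "admissible s \<Longrightarrow> min_word s \<in> W"
  by (metis min_word_attained admissible_def subsetD)

lemma min_word_le_Min_heard: "u \<in> P \<Longrightarrow> min_word s \<le> Min (heard E s u)"
  using Min_heard_in[of u s] nbhd_subset[THEN subsetD] min_word_le by (auto simp: heard_def)

lemma Min_heard_eq_min_word_iff: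
  assumes "u \<in> P"
  shows "Min (heard E s u) = min_word s \<longleftrightarrow> (\<exists>w\<in>nbhd E u. word s w = min_word s)"
proof
  assume "Min (heard E s u) = min_word s"
  then show "\<exists>w\<in>nbhd E u. word s w = min_word s"
    using Min_heard_in[OF assms, of s] by (auto simp: heard_def)
next
  assume "\<exists>w\<in>nbhd E u. word s w = min_word s"
  then have "Min (heard E s u) \<le> min_word s"
    by (metis Min_le finite_heard heard_def imageI)
  then show "Min (heard E s u) = min_word s"
    using min_word_le_Min_heard[OF assms, of s] by simp
qed

lemma word_update_attained:
  assumes "u \<in> P" "v \<in> P"
  obtains z where "z \<in> P" "word (update E u s) v = word s z"
proof -
  have "heard E s u \<subseteq> word s ` P"
    unfolding heard_def by (rule image_mono[OF nbhd_subset])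
  then have "Min (heard E s u) \<in> word s ` P"
    using Min_heard_in[OF \<open>u \<in> P\<close>] by blast
  then have "\<exists>z\<in>P. word (update E u s) v = word s z"
    using assms by (cases "v = u") (auto simp: update_self update_other)
  then show thesis
    using that by blast
qed

lemma min_word_update_ge: "u \<in> P \<Longrightarrow> min_word s \<le> min_word (update E u s)"
  by (metis min_word_attained min_word_le word_update_attained)

lemma min_word_update_eq:
  "u \<in> P \<Longrightarrow> v \<in> P \<Longrightarrow> word (update E u s) v = min_word s \<Longrightarrow> min_word (update E u s) = min_word s"
  by (metis antisym min_word_le min_word_update_ge)

definition slack :: "config \<Rightarrow> nat \<Rightarrow> nat" where
  "slack s v = card W + 1 - card (memory s v)"

lemma slack_bounds:
  assumes "admissible s" "v \<in> P"
  shows "1 \<le> slack s v" "slack s v \<le> card W"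
proof -
  have "memory s v \<noteq> {}" "memory s v \<subseteq> W"
    using assms by (auto simp: admissible_def)
  then have "1 \<le> card (memory s v)" "card (memory s v) \<le> card W"
    using finite_W finite_subset by (auto simp: Suc_le_eq card_gt_0_iff intro: card_mono)
  then show "1 \<le> slack s v" "slack s v \<le> card W"
    by (auto simp: slack_def)
qed

lemma sum_slack_bounds:
  assumes "admissible s" "A \<subseteq> P"
  shows "card A \<le> (\<Sum>v\<in>A. slack s v)" "(\<Sum>v\<in>A. slack s v) \<le> card W * card A"
  using sum_mono[of A "\<lambda>_. 1" "slack s"] sum_mono[of A "slack s" "\<lambda>_. card W"]
    slack_bounds[OF assms(1)] assms(2)
  by (auto simp: mult.commute)

lemma slack_update_less:
  assumes "admissible s" "u \<in> P" "\<not> heard E s u \<subseteq> memory s u"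
  shows "slack (update E u s) u < slack s u"
proof -
  have "memory s u \<subset> memory (update E u s) u"
    using assms(3) by (auto simp: update_self)
  moreover have "memory (update E u s) u \<subseteq> W"
    using admissible_update[OF assms(1,2)] assms(2) by (auto simp: admissible_def)
  ultimately have "card (memory s u) < card (memory (update E u s) u)"
    "card (memory (update E u s) u) \<le> card W"
    using finite_W by (auto intro: psubset_card_mono card_mono finite_subset)
  then show ?thesis
    by (simp add: slack_def)
qed

lemma sum_slack_update:
  assumes "admissible s" "u \<in> P" "A \<subseteq> P" "u \<in> A \<Longrightarrow> \<not> heard E s u \<subseteq> memory s u"
  shows "(\<Sum>v\<in>A. slack (update E u s) v) \<le> (\<Sum>v\<in>A. slack s v)"
    and "u \<in> A \<Longrightarrow> (\<Sum>v\<in>A. slack (update E u s) v) < (\<Sum>v\<in>A. slack s v)"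
proof -
  have finite_A: "finite A"
    using assms(3) finite_P finite_subset by blast
  have other: "slack (update E u s) v = slack s v" if "v \<noteq> u" for v
    using that by (simp add: slack_def update_other)
  show strict: "(\<Sum>v\<in>A. slack (update E u s) v) < (\<Sum>v\<in>A. slack s v)" if "u \<in> A"
    using slack_update_less[OF assms(1,2) assms(4)[OF that]] that other
    by (intro sum_strict_mono_ex1[OF finite_A]) (metis order.refl less_imp_le, blast)
  show "(\<Sum>v\<in>A. slack (update E u s) v) \<le> (\<Sum>v\<in>A. slack s v)"
  proof (cases "u \<in> A")
    case True
    then show ?thesis using strict by (simp add: less_imp_le)
  next
    case False
    then show ?thesis using other by (metis order.refl sum.cong)
  qed
qed

definition consensus :: "config \<Rightarrow> bool" where
  "consensus s \<longleftrightarrow> (\<forall>v\<in>P. word s v = min_word s)"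

definition uncollapsed :: "config \<Rightarrow> nat set" where
  "uncollapsed s = {v\<in>P. memory s v \<noteq> {min_word s}}"

lemma update_consensus:
  assumes "admissible s" "consensus s" "u \<in> P"
  shows "update E u s = s(u := ({min_word s}, min_word s))"
proof -
  have "heard E s u \<subseteq> {min_word s}"
    using assms(2) nbhd_subset by (auto simp: heard_def consensus_def)
  moreover have "heard E s u \<noteq> {}"
    using nbhd_nonempty[OF assms(3)] by (simp add: heard_def)
  ultimately have "heard E s u = {min_word s}"
    by blast
  moreover have "min_word s \<in> memory s u"
    using assms by (auto simp: admissible_def consensus_def)
  ultimately show ?thesis
    by (auto simp: fun_eq_iff update_self update_other)
qed

lemma consensus_update:
  assumes "admissible s" "consensus s" "u \<in> P"
  shows "consensus (update E u s)" "min_word (update E u s) = min_word s"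
    "uncollapsed (update E u s) = uncollapsed s - {u}"
proof -
  have "word (update E u s) u = min_word s"
    using update_consensus[OF assms] by simp
  then show min_eq: "min_word (update E u s) = min_word s"
    using min_word_update_eq[OF assms(3,3)] by blast
  show "consensus (update E u s)"
    using assms(2) update_consensus[OF assms] min_eq by (auto simp: consensus_def)
  show "uncollapsed (update E u s) = uncollapsed s - {u}"
    using update_consensus[OF assms] min_eq by (auto simp: uncollapsed_def)
qed

lemma uncollapsed_nonempty:
  assumes "admissible s" "consensus s" "\<not> fixed_point P E s"
  shows "uncollapsed s \<noteq> {}"
proof
  assume "uncollapsed s = {}"
  then have "s u = ({min_word s}, min_word s)" if "u \<in> P" for u
    using assms(2) that by (auto simp: uncollapsed_def consensus_def prod_eq_iff)
  then have "update E u s = s" if "u \<in> P" for u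
    using update_consensus[OF assms(1,2) that] that by (metis fun_upd_triv)
  then show False
    using assms(3) by (simp add: fixed_point_def)
qed

definition settled :: "config \<Rightarrow> nat set" where
  "settled s = {v\<in>P. word s v = min_word s \<and> (\<exists>w\<in>nbhd E v. word s w = min_word s)}"

lemma settled_subset: "settled s \<subseteq> P"
  by (auto simp: settled_def)

lemma settled_nbhd:
  assumes "v \<in> settled s"
  obtains w where "w \<in> nbhd E v" "w \<in> settled s"
proof -
  obtain w where "w \<in> nbhd E v" "word s w = min_word s"
    using assms by (auto simp: settled_def)
  moreover have "w \<in> P" "v \<in> nbhd E w"
    using \<open>w \<in> nbhd E v\<close> nbhd_subset in_nbhd_commute by auto
  ultimately show thesis
    using that assms by (auto simp: settled_def)
qed

lemma word_update_settled:
  assumes "u \<in> P" "v \<in> settled s"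
  shows "word (update E u s) v = min_word s"
  using assms Min_heard_eq_min_word_iff[OF assms(1), of s]
  by (cases "v = u") (auto simp: settled_def update_self update_other)

lemma settled_update:
  assumes "u \<in> P" "settled s \<noteq> {}"
  shows "min_word (update E u s) = min_word s" "settled s \<subseteq> settled (update E u s)"
proof -
  show min_eq: "min_word (update E u s) = min_word s"
    using assms min_word_update_eq word_update_settled settled_subset by blast
  show "settled s \<subseteq> settled (update E u s)"
  proof
    fix v assume "v \<in> settled s"
    moreover obtain w where "w \<in> nbhd E v" "w \<in> settled s"
      using settled_nbhd[OF \<open>v \<in> settled s\<close>] .
    ultimately show "v \<in> settled (update E u s)"
      using word_update_settled[OF assms(1)] min_eq settled_subset
      by (auto simp: settled_def[of "update E u s"])
  qed
qed

lemma collapse_settles: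
  assumes "u \<in> P" "heard E s u \<subseteq> memory s u" "w \<in> nbhd E u" "word s w = min_word s"
    and "min_word (update E u s) = min_word s"
  shows "u \<in> settled (update E u s)"
proof -
  have "w \<noteq> u"
    using assms(3) not_in_nbhd_self by auto
  then have "word (update E u s) w = min_word s"
    using assms(4) by (simp add: update_other)
  moreover have "word (update E u s) u = min_word s"
    using assms(1-4) Min_heard_eq_min_word_iff[OF assms(1)] by (auto simp: update_self)
  ultimately show ?thesis
    using assms(1,3,5) by (auto simp: settled_def)
qed

definition frontier :: "config \<Rightarrow> nat set" where
  "frontier s = {v\<in>P - settled s. \<exists>w\<in>nbhd E v. w \<in> settled s}"

definition holders :: "config \<Rightarrow> nat set" where
  "holders s = {v\<in>P. word s v = min_word s}"

definition words_above :: "config \<Rightarrow> nat" where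
  "words_above s = card {w\<in>W. min_word s < w}"

definition active :: "config \<Rightarrow> nat set" where
  "active s = (if settled s \<noteq> {} then frontier s else holders s)"

definition active_slack :: "config \<Rightarrow> nat" where
  "active_slack s = (\<Sum>v\<in>active s. slack s v)"

definition level :: "config \<Rightarrow> nat" where
  "level s = (if consensus s then 0
             else if settled s \<noteq> {} then card (P - settled s)
             else card P + words_above s + 1)"

lemma active_subset: "active s \<subseteq> P"
  by (auto simp: active_def frontier_def holders_def)

lemma settled_ne_P: "\<not> consensus s \<Longrightarrow> P - settled s \<noteq> {}"
  by (auto simp: consensus_def settled_def)

lemma active_nonempty:
  assumes "\<not> consensus s"
  shows "active s \<noteq> {}"
proof (cases "settled s = {}")
  case True
  obtain v where "v \<in> P" "word s v = min_word s"
    by (rule min_word_attained)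
  then show ?thesis
    using True by (auto simp: active_def holders_def)
next
  case False
  then obtain a b where "a \<in> settled s" "b \<in> P - settled s"
    using settled_ne_P[OF assms] by blast
  then obtain x y where "x \<in> settled s" "y \<in> P - settled s" "x \<in> nbhd E y"
    using edge_leaving[OF settled_subset] by metis
  then show ?thesis
    using False by (auto simp: active_def frontier_def)
qed

lemma level_pos: "\<not> consensus s \<Longrightarrow> 0 < level s"
  using settled_ne_P finite_P by (auto simp: level_def card_gt_0_iff)

lemma level_le: "level s \<le> card P + card W + 1"
proof -
  have "card (P - settled s) \<le> card P" "words_above s \<le> card W"
    using finite_P finite_W by (auto simp: words_above_def intro: card_mono)
  then show ?thesis
    by (auto simp: level_def)
qed

lemma holders_update:
  assumes "u \<in> P" "settled (update E u s) = {}" "min_word (update E u s) = min_word s"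
  shows "holders (update E u s) = (if heard E s u \<subseteq> memory s u then holders s - {u} else holders s)"
proof (cases "heard E s u \<subseteq> memory s u")
  case True
  then have "\<not> (\<exists>w\<in>nbhd E u. word s w = min_word s)"
    using collapse_settles[OF assms(1) True _ _ assms(3)] assms(2) by blast
  then have "word (update E u s) u \<noteq> min_word s"
    using True Min_heard_eq_min_word_iff[OF assms(1)] by (simp add: update_self)
  then have "v \<in> holders (update E u s) \<longleftrightarrow> v \<in> holders s - {u}" for v
    using assms(3) by (cases "v = u") (auto simp: holders_def update_other)
  then show ?thesis
    using True by auto
next
  case False
  then have "word (update E u s) u = word s u"
    by (simp add: update_self)
  then have "v \<in> holders (update E u s) \<longleftrightarrow> v \<in> holders s" for v
    using assms(3) by (cases "v = u") (auto simp: holders_def update_other)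
  then show ?thesis
    using False by auto
qed

lemma sum_slack_holders_update:
  assumes "admissible s" "u \<in> P" "settled (update E u s) = {}" "min_word (update E u s) = min_word s"
  defines "s' \<equiv> update E u s"
  shows "(\<Sum>v\<in>holders s'. slack s' v) \<le> (\<Sum>v\<in>holders s. slack s v)"
    and "u \<in> holders s \<Longrightarrow> (\<Sum>v\<in>holders s'. slack s' v) < (\<Sum>v\<in>holders s. slack s v)"
proof -
  have holders_s': "holders s' = (if heard E s u \<subseteq> memory s u then holders s - {u} else holders s)"
    using holders_update[OF assms(2-4)] by (simp add: s'_def)
  have "(\<Sum>v\<in>holders s'. slack s' v) \<le> (\<Sum>v\<in>holders s. slack s v) \<and>
      (u \<in> holders s \<longrightarrow> (\<Sum>v\<in>holders s'. slack s' v) < (\<Sum>v\<in>holders s. slack s v))"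
  proof (cases "heard E s u \<subseteq> memory s u")
    case True
    have "(\<Sum>v\<in>holders s - {u}. slack s' v) \<le> (\<Sum>v\<in>holders s - {u}. slack s v)"
      using sum_slack_update(1)[OF assms(1,2), of "holders s - {u}"] by (auto simp: holders_def s'_def)
    moreover have "(\<Sum>v\<in>holders s. slack s v) = slack s u + (\<Sum>v\<in>holders s - {u}. slack s v)"
      if "u \<in> holders s"
      using that finite_P by (simp add: holders_def sum.remove)
    ultimately show ?thesis
      using True holders_s' slack_bounds(1)[OF assms(1,2)] by (cases "u \<in> holders s") auto
  next
    case False
    then show ?thesis
      using holders_s' sum_slack_update[OF assms(1,2), of "holders s"]
      by (auto simp: holders_def s'_def)
  qed
  then show "(\<Sum>v\<in>holders s'. slack s' v) \<le> (\<Sum>v\<in>holders s. slack s v)"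
    and "u \<in> holders s \<Longrightarrow> (\<Sum>v\<in>holders s'. slack s' v) < (\<Sum>v\<in>holders s. slack s v)"
    by simp_all
qed

lemma level_update_settled:
  assumes "admissible s" "\<not> consensus s" "settled s \<noteq> {}" "u \<in> P"
  defines "s' \<equiv> update E u s"
  shows "level s' < level s \<or>
         level s' = level s \<and> active_slack s' \<le> active_slack s \<and>
         (u \<in> active s \<longrightarrow> active_slack s' < active_slack s)"
proof -
  have min_eq: "min_word s' = min_word s" and settled_mono: "settled s \<subseteq> settled s'"
    using settled_update[OF assms(4,3)] by (simp_all add: s'_def)
  have level_s: "level s = card (P - settled s)"
    using assms(2,3) by (simp add: level_def)
  consider "consensus s'" | "\<not> consensus s'" "settled s' \<noteq> settled s"
    | "\<not> consensus s'" "settled s' = settled s"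
    by blast
  then show ?thesis
  proof cases
    case 1
    then show ?thesis
      using level_pos[OF assms(2)] by (simp add: level_def)
  next
    case 2
    then have "P - settled s' \<subset> P - settled s"
      using settled_mono settled_subset by blast
    then have "card (P - settled s') < card (P - settled s)"
      using finite_P by (meson finite_Diff psubset_card_mono)
    then show ?thesis
      using 2 settled_mono assms(3) level_s by (auto simp: level_def)
  next
    case 3
    have no_collapse: "\<not> heard E s u \<subseteq> memory s u" if "u \<in> active s"
    proof
      assume "heard E s u \<subseteq> memory s u"
      moreover obtain w where "w \<in> nbhd E u" "w \<in> settled s"
        using \<open>u \<in> active s\<close> assms(3) by (auto simp: active_def frontier_def)
      ultimately have "u \<in> settled s'"
        using collapse_settles[OF assms(4)] min_eq by (auto simp: settled_def s'_def)
      then show False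
        using 3 \<open>u \<in> active s\<close> assms(3) by (simp add: active_def frontier_def)
    qed
    have "active s' = active s"
      using 3 assms(3) by (simp add: active_def frontier_def)
    then show ?thesis
      using 3 assms(2,3) sum_slack_update[OF assms(1,4) active_subset no_collapse]
      by (simp add: level_def active_slack_def s'_def)
  qed
qed

lemma level_update_unsettled:
  assumes "admissible s" "\<not> consensus s" "settled s = {}" "u \<in> P"
  defines "s' \<equiv> update E u s"
  shows "level s' < level s \<or>
         level s' = level s \<and> active_slack s' \<le> active_slack s \<and>
         (u \<in> active s \<longrightarrow> active_slack s' < active_slack s)"
proof -
  have level_s: "level s = card P + words_above s + 1"
    using assms(2,3) by (simp add: level_def)
  have min_ge: "min_word s \<le> min_word s'"
    using min_word_update_ge[OF assms(4)] by (simp add: s'_def)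
  consider "consensus s' \<or> settled s' \<noteq> {}"
    | "\<not> consensus s'" "settled s' = {}" "min_word s' \<noteq> min_word s"
    | "\<not> consensus s'" "settled s' = {}" "min_word s' = min_word s"
    by blast
  then show ?thesis
  proof cases
    case 1
    have "card (P - settled s') \<le> card P"
      using finite_P by (simp add: card_mono)
    then show ?thesis
      using 1 level_s by (auto simp: level_def)
  next
    case 2
    have "min_word s' \<in> W"
      using min_word_in_W admissible_update[OF assms(1,4)] by (simp add: s'_def)
    then have "{w\<in>W. min_word s' < w} \<subset> {w\<in>W. min_word s < w}"
      using 2 min_ge by auto
    then have "words_above s' < words_above s"
      using finite_W by (simp add: words_above_def psubset_card_mono)
    then show ?thesis
      using 2 level_s by (simp add: level_def)
  next
    case 3
    have same_level: "level s' = level s"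
      using 3 level_s by (simp add: level_def words_above_def)
    have "active_slack s' \<le> active_slack s \<and> (u \<in> active s \<longrightarrow> active_slack s' < active_slack s)"
      using sum_slack_holders_update[OF assms(1,4)] 3 assms(3)
      by (simp add: active_def active_slack_def s'_def)
    then show ?thesis
      using same_level by simp
  qed
qed

lemma level_update:
  assumes "admissible s" "\<not> consensus s" "u \<in> P"
  shows "level (update E u s) < level s \<or>
         level (update E u s) = level s \<and> active_slack (update E u s) \<le> active_slack s \<and>
         (u \<in> active s \<longrightarrow> active_slack (update E u s) < active_slack s)"
  using level_update_settled[OF assms(1,2) _ assms(3)] level_update_unsettled[OF assms(1,2) _ assms(3)]
  by blast

definition H :: real where
  "H = harm (card P * card W)"

definition stage :: "nat \<Rightarrow> real" where
  "stage k = real (card P) * H * (1 + real (card W) * real k)"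

text \<open>Outside consensus the potential is lexicographic in \<open>(level, active_slack)\<close>: its harmonic
  part never exceeds \<open>stage k - stage (k - 1)\<close>, so any decrease of the level pays for it.\<close>

definition potential :: "config \<Rightarrow> real" where
  "potential s =
     (if consensus s then real (card P) * harm (card (uncollapsed s))
      else stage (level s - 1) + real (card P) * real (card W) * harm (active_slack s))"

lemma H_nonneg: "0 \<le> H"
  by (simp add: H_def harm_nonneg)

lemma stage_mono: "k \<le> l \<Longrightarrow> stage k \<le> stage l"
  using H_nonneg by (simp add: stage_def mult_left_mono)

lemma stage_nonneg: "0 \<le> stage k"
  using H_nonneg by (simp add: stage_def)

lemma potential_nonneg: "0 \<le> potential s"
  using stage_nonneg by (simp add: potential_def harm_nonneg)

lemma potential_le_stage_level:
  assumes "admissible s"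
  shows "potential s \<le> stage (level s)"
proof (cases "consensus s")
  case True
  have "card (uncollapsed s) \<le> card P"
    using finite_P by (auto simp: uncollapsed_def intro: card_mono)
  also have "\<dots> \<le> card P * card W"
    using finite_W W_nonempty by (simp add: Suc_le_eq card_gt_0_iff)
  finally have "harm (card (uncollapsed s)) \<le> H"
    by (simp add: H_def harm_mono)
  then show ?thesis
    using True by (simp add: potential_def stage_def level_def mult_left_mono)
next
  case False
  have "active_slack s \<le> card W * card (active s)" "card (active s) \<le> card P"
    using sum_slack_bounds(2)[OF assms active_subset] finite_P card_mono[OF _ active_subset]
    by (simp_all add: active_slack_def)
  then have "harm (active_slack s) \<le> H"
    unfolding H_def by (intro harm_mono) (metis le_trans mult.commute mult_le_mono2)
  then have "real (card P) * real (card W) * harm (active_slack s) \<le>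
      real (card P) * real (card W) * H"
    by (simp add: mult_left_mono)
  moreover have "stage (level s - 1) + real (card P) * real (card W) * H = stage (level s)"
    using level_pos[OF False] by (simp add: stage_def algebra_simps of_nat_diff)
  ultimately show ?thesis
    using False by (simp add: potential_def)
qed

lemma potential_drift_consensus:
  assumes "admissible s" "consensus s" "\<not> fixed_point P E s"
  shows "real (card P) + (\<Sum>u\<in>P. potential (update E u s)) \<le> real (card P) * potential s"
proof -
  have finite_uncollapsed: "finite (uncollapsed s)"
    using finite_P by (simp add: uncollapsed_def)
  have "potential (update E u s) = 0 + real (card P) * harm (card (uncollapsed s - {u}))"
    if "u \<in> P" for u
    using consensus_update[OF assms(1,2) that] by (simp add: potential_def)
  moreover have "card (uncollapsed s - {u}) \<le> card (uncollapsed s)"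
    "u \<in> uncollapsed s \<Longrightarrow> card (uncollapsed s - {u}) < card (uncollapsed s)" for u
    by (rule card_Diff1_le, rule card_Diff1_less[OF finite_uncollapsed])
  ultimately have step: "potential (update E u s) \<le> 0 \<or>
      (\<exists>S'. potential (update E u s) = 0 + real (card P) * harm S' \<and> S' \<le> card (uncollapsed s) \<and>
        (u \<in> uncollapsed s \<longrightarrow> S' < card (uncollapsed s)))" if "u \<in> P" for u
    using that by blast
  have "0 < card (uncollapsed s)"
    using finite_uncollapsed uncollapsed_nonempty[OF assms] by (simp add: card_gt_0_iff)
  then have "real (card P) + (\<Sum>u\<in>P. potential (update E u s)) \<le>
      real (card P) * (0 + real (card P) * harm (card (uncollapsed s)))"
    by (intro harmonic_potential_drift[where D = "uncollapsed s", OF finite_P _ _ _ _ step])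
      (auto simp: uncollapsed_def)
  then show ?thesis
    using assms(2) by (simp add: potential_def)
qed

lemma potential_drift_no_consensus:
  assumes "admissible s" "\<not> consensus s"
  shows "real (card P) + (\<Sum>u\<in>P. potential (update E u s)) \<le> real (card P) * potential s"
proof -
  define b where "b = stage (level s - 1)"
  define c where "c = real (card P) * real (card W)"
  have step: "potential (update E u s) \<le> b \<or>
      (\<exists>S'. potential (update E u s) = b + c * harm S' \<and> S' \<le> active_slack s \<and>
        (u \<in> active s \<longrightarrow> S' < active_slack s))" if "u \<in> P" for u
    using level_update[OF assms that]
  proof (elim disjE conjE)
    assume "level (update E u s) < level s"
    then have "stage (level (update E u s)) \<le> b"
      unfolding b_def by (intro stage_mono) simp
    then show ?thesis
      using potential_le_stage_level[OF admissible_update[OF assms(1) that]] by simp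
  next
    assume "level (update E u s) = level s" "active_slack (update E u s) \<le> active_slack s"
      "u \<in> active s \<longrightarrow> active_slack (update E u s) < active_slack s"
    moreover have "\<not> consensus (update E u s)"
      using \<open>level (update E u s) = level s\<close> level_pos[OF assms(2)] by (auto simp: level_def)
    ultimately show ?thesis
      by (auto simp: potential_def b_def c_def)
  qed
  have "0 < card (active s)"
    using active_nonempty[OF assms(2)] finite_subset[OF active_subset finite_P]
    by (simp add: card_gt_0_iff)
  also have "card (active s) \<le> active_slack s"
    using sum_slack_bounds(1)[OF assms(1) active_subset] by (simp add: active_slack_def)
  finally have "0 < active_slack s" .
  moreover have "real (active_slack s) \<le> real (card W) * real (card (active s))"
    using sum_slack_bounds(2)[OF assms(1) active_subset[of s]]
    by (simp only: active_slack_def of_nat_mult[symmetric] of_nat_le_iff)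
  then have "real (card P) * real (active_slack s) \<le> c * real (card (active s))"
    by (simp add: c_def mult.assoc mult_left_mono)
  ultimately have "real (card P) + (\<Sum>u\<in>P. potential (update E u s)) \<le>
      real (card P) * (b + c * harm (active_slack s))"
    using finite_P active_subset step by (intro harmonic_potential_drift) (auto simp: c_def)
  then show ?thesis
    using assms(2) by (simp add: potential_def b_def c_def)
qed

lemma potential_drift:
  assumes "admissible s" "\<not> fixed_point P E s"
  shows "real (card P) + (\<Sum>u\<in>P. potential (update E u s)) \<le> real (card P) * potential s"
  using potential_drift_consensus[OF assms(1) _ assms(2)] potential_drift_no_consensus[OF assms(1)]
  by blast

lemma stage_le:
  assumes "card W \<le> card P"
  shows "stage (card P + card W + 1) \<le> 12 * real (card P) ^ 2 * real (card W) * ln (real (card P))"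
proof -
  define n where "n = real (card P)"
  define q where "q = real (card W)"
  define L where "L = ln n"
  have n: "2 \<le> n" and q: "1 \<le> q" "q \<le> n"
    using two_le_card_P finite_W W_nonempty assms by (auto simp: n_def q_def Suc_le_eq card_gt_0_iff)
  have "ln 2 \<le> L"
    using n by (simp add: L_def)
  then have L: "1 / 2 \<le> L"
    using ln2_ge_two_thirds by linarith
  have "1 \<le> card P * card W"
    using finite_P P_nonempty finite_W W_nonempty by (simp add: Suc_le_eq card_gt_0_iff)
  then have "H \<le> ln (n * q) + 1"
    unfolding H_def n_def q_def using harm_le_ln_plus_1 by fastforce
  also have "ln (n * q) \<le> ln (n * n)"
    using n q by (simp add: mult_left_mono)
  also have "ln (n * n) = 2 * L"
    using n by (simp add: L_def ln_mult)
  finally have H: "H \<le> 4 * L"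
    using L by linarith
  have "q * q \<le> n * q" "2 * q \<le> n * q"
    using n q by (simp_all add: mult_right_mono)
  moreover have "q * (n + q + 1) = n * q + q * q + q"
    by (simp add: algebra_simps)
  ultimately have "1 + q * (n + q + 1) \<le> 3 * (n * q)"
    using q by linarith
  have "stage (card P + card W + 1) = n * H * (1 + q * (n + q + 1))"
    by (simp add: stage_def n_def q_def)
  also have "\<dots> \<le> n * (4 * L) * (3 * (n * q))"
    using \<open>1 + q * (n + q + 1) \<le> 3 * (n * q)\<close> H H_nonneg n q
    by (intro mult_mono) auto
  finally show ?thesis
    by (simp add: n_def q_def L_def power2_eq_square algebra_simps)
qed

end

theorem theorem1:
  shows "\<exists>C::real. \<forall>(n::nat) (E::(nat \<times> nat) set) (W::nat set) (c0::config).
           n \<ge> 2 \<longrightarrow> simple_connected_graph {1..n} E \<longrightarrow> finite W \<longrightarrow>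
           (\<forall>u\<in>{1..n}. snd (c0 u) \<in> W \<and> fst (c0 u) = {snd (c0 u)}) \<longrightarrow>
           expected_hit_time {1..n} E c0
             \<le> ennreal (C * real n ^ 2 * real (card W) * ln (real n))"
proof (intro exI[of _ 12] allI impI)
  fix n :: nat and E :: "(nat \<times> nat) set" and W :: "nat set" and c0 :: config
  assume "n \<ge> 2" "simple_connected_graph {1..n} E" "finite W"
    and init: "\<forall>u\<in>{1..n}. snd (c0 u) \<in> W \<and> fst (c0 u) = {snd (c0 u)}"
  \<comment> \<open>Only initially present words are ever conveyed, hence \<open>card W0 \<le> n\<close> as well.\<close>
  define W0 where "W0 = word c0 ` {1..n}"
  interpret word_network "{1..n}" E W0
    using \<open>n \<ge> 2\<close> \<open>simple_connected_graph {1..n} E\<close> by unfold_locales (auto simp: W0_def)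
  have "admissible c0"
    unfolding admissible_def using init by (auto simp: W0_def)
  have "card W0 \<le> n" "card W0 \<le> card W"
    using card_image_le[of "{1..n}" "word c0"] init \<open>finite W\<close>
    by (auto simp: W0_def intro!: card_mono)
  have "expected_hit_time {1..n} E c0 \<le> ennreal (potential c0)"
    using finite_P P_nonempty \<open>admissible c0\<close> admissible_update potential_nonneg potential_drift
    by (rule expected_hit_time_le_potential)
  also have "potential c0 \<le> stage (n + card W0 + 1)"
    using potential_le_stage_level[OF \<open>admissible c0\<close>] level_le[of c0] stage_mono by fastforce
  also have "\<dots> \<le> 12 * real n ^ 2 * real (card W0) * ln (real n)"
    using stage_le \<open>card W0 \<le> n\<close> by simp
  also have "\<dots> \<le> 12 * real n ^ 2 * real (card W) * ln (real n)"
    using \<open>card W0 \<le> card W\<close> \<open>n \<ge> 2\<close> by (intro mult_right_mono mult_left_mono) auto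
  finally show "expected_hit_time {1..n} E c0 \<le> ennreal (12 * real n ^ 2 * real (card W) * ln (real n))"
    by (simp add: ennreal_leI)
qed

end
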